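(* Let $\boldsymbol\Theta^*\in\mathbb R^{n\times r}$ (rows $\boldsymbol\theta_i^{*T}$) and $\mathbf A^*\in\mathbb R^{p\times r}$ (rows $\mathbf a_j^{*T}$) with $\mathbf M^*=\boldsymbol\Theta^*(\mathbf A^* )^T$, let $\mathbf A\in\mathbb R^{p\times r}$ (rows $\mathbf a_j^T$), fix $i\in[n]$, and suppose $\|\boldsymbol\Theta^*\|_{2\to\infty}\le C_1$, $\|\mathbf A^*\|_{2\to\infty}\le C_2$, $\|\mathbf A\|_{2\to\infty}\le C_2$ and $\sigma_r(\mathcal I_{1,i}(\mathbf A))>0$. If there exists $\xi>0$ such that $$2\sigma_r^{-1}(\mathcal I_{1,i}(\mathbf A))\big\{\|\mathbf Z_{i\cdot}\mathrm{diag}(\boldsymbol\Omega_{i\cdot})\mathbf A\|+\|\mathbf B_{1,i}(\mathbf A)\|+\beta_{1,i}(\mathbf A)\kappa_3(C_2(C_1+\xi))\big\}\le\xi\le\frac{\sigma_r(\mathcal I_{1,i}(\mathbf A))}{2\gamma_{1,i}(\mathbf A)\kappa_3(C_2(C_1+\xi))}$$ (the right-hand side read as $+\infty$ if its denominator is $0$), then there exists $\tilde{\boldsymbol\theta}_i\in\mathbb R^r$ with $\|\tilde{\boldsymbol\theta}_i-\boldsymbol\theta_i^*\|\le\xi$ and $S_{1,i}(\tilde{\boldsymbol\theta}_i;\mathbf A)=\mathbf 0$.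
   Context: Deterministic setting: $\phi>0$; $b:\mathbb R\to\mathbb R$ is three times continuously differentiable with $b''>0$; $y_{ij}\in\mathbb R$ and $\omega_{ij}\in\{0,1\}$ are fixed numbers; $z_{ij}=y_{ij}-b'(m^*_{ij})$, $\mathbf Z_{i\cdot}=(z_{i1},\dots,z_{ip})\in\mathbb R^{1\times p}$, $\mathrm{diag}(\boldsymbol\Omega_{i\cdot})=\mathrm{diag}(\omega_{i1},\dots,\omega_{ip})$. $\kappa_3(\alpha)=\sup_{|x|\le\alpha}|b'''(x)|$. Definitions: $S_{1,i}(\boldsymbol\theta;\mathbf A)=\phi^{-1}\sum_{j=1}^p\omega_{ij}\{y_{ij}-b'(\mathbf a_j^T\boldsymbol\theta)\}\mathbf a_j$; $\mathbf B_{1,i}(\mathbf A)=\sum_{j=1}^p\omega_{ij}b''(m^*_{ij})\mathbf a_j(\mathbf a_j-\mathbf a_j^* )^T\boldsymbol\theta_i^*$; $\mathcal I_{1,i}(\mathbf A)=\sum_{j=1}^p\omega_{ij}b''(m^*_{ij})\mathbf a_j\mathbf a_j^T$; $\beta_{1,i}(\mathbf A)=\sup_{\|\mathbf u\|=1}\sum_j\omega_{ij}((\mathbf a_j-\mathbf a_j^* )^T\boldsymbol\theta_i^* )^2|\mathbf a_j^T\mathbf u|$; $\gamma_{1,i}(\mathbf A)=\sup_{\|\mathbf u\|=1}\sum_j\omega_{ij}|\mathbf a_j^T\mathbf u|^3$. $\sigma_r(\cdot)$ denotes the $r$-th largest singular value; $\|X\|_{2\to\infty}$ the maximal row Euclidean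 norm. *)

theory Defs
  imports "HOL-Analysis.Analysis"
begin

text \<open>Matrices: a matrix with rows indexed by 'm and r columns is a value of type
  real^'r^'m; row k is X $ k.\<close>

definition two_to_inf_norm :: "real^'r^'m::finite \<Rightarrow> real" where
  "two_to_inf_norm X = (MAX k\<in>UNIV. norm (X $ k))"

text \<open>r-th largest (= smallest) singular value of an r x r matrix.\<close>
definition sigma_min :: "real^'r::finite^'r \<Rightarrow> real" where
  "sigma_min M = (INF u\<in>{u::real^'r. norm u = 1}. norm (M *v u))"

definition kappa3 :: "(real \<Rightarrow> real) \<Rightarrow> real \<Rightarrow> real" where
  "kappa3 b3 \<alpha> = (SUP x\<in>{x. \<bar>x\<bar> \<le> \<alpha>}. \<bar>b3 x\<bar>)"

definition S1 :: "real \<Rightarrow> (real \<Rightarrow> real) \<Rightarrow> ('p::finite \<Rightarrow> real) \<Rightarrow> ('p \<Rightarrow> real)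
    \<Rightarrow> real^'r::finite \<Rightarrow> real^'r^'p \<Rightarrow> real^'r" where
  "S1 \<phi> b1 y \<omega> \<theta> A = (1/\<phi>) *\<^sub>R (\<Sum>j\<in>UNIV. (\<omega> j * (y j - b1 ((A $ j) \<bullet> \<theta>))) *\<^sub>R (A $ j))"

definition B1 :: "(real \<Rightarrow> real) \<Rightarrow> ('p::finite \<Rightarrow> real) \<Rightarrow> ('p \<Rightarrow> real)
    \<Rightarrow> real^'r::finite \<Rightarrow> real^'r^'p \<Rightarrow> real^'r^'p \<Rightarrow> real^'r" where
  "B1 b2 \<omega> mstar \<theta>star Astar A =
     (\<Sum>j\<in>UNIV. (\<omega> j * b2 (mstar j) * ((A $ j - Astar $ j) \<bullet> \<theta>star)) *\<^sub>R (A $ j))"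

definition I1 :: "(real \<Rightarrow> real) \<Rightarrow> ('p::finite \<Rightarrow> real) \<Rightarrow> ('p \<Rightarrow> real)
    \<Rightarrow> real^'r::finite^'p \<Rightarrow> real^'r^'r" where
  "I1 b2 \<omega> mstar A =
     (\<Sum>j\<in>UNIV. (\<omega> j * b2 (mstar j)) *\<^sub>R (\<chi> k l. (A $ j $ k) * (A $ j $ l)))"

definition beta1 :: "('p::finite \<Rightarrow> real) \<Rightarrow> real^'r::finite \<Rightarrow> real^'r^'p \<Rightarrow> real^'r^'p \<Rightarrow> real" where
  "beta1 \<omega> \<theta>star Astar A = (SUP u\<in>{u::real^'r. norm u = 1}.
     \<Sum>j\<in>UNIV. \<omega> j * ((A $ j - Astar $ j) \<bullet> \<theta>star)\<^sup>2 * \<bar>(A $ j) \<bullet> u\<bar>)"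

definition gamma1 :: "('p::finite \<Rightarrow> real) \<Rightarrow> real^'r::finite^'p \<Rightarrow> real" where
  "gamma1 \<omega> A = (SUP u\<in>{u::real^'r. norm u = 1}. \<Sum>j\<in>UNIV. \<omega> j * \<bar>(A $ j) \<bullet> u\<bar> ^ 3)"

end

theory Submission
  imports Defs
begin

text \<open>Expanding \<open>b'\<close> to second order around \<open>m\<^sup>*\<^sub>i\<^sub>j\<close> shows that \<open>\<phi> S\<^sub>1\<^sub>,\<^sub>i(\<theta>)\<close> differs from the
  affine map \<open>-\<I>\<^sub>1\<^sub>,\<^sub>i (\<theta> - \<theta>\<^sup>*\<^sub>i)\<close> by the noise term \<open>Z\<^sub>i diag(\<Omega>\<^sub>i) A\<close>, the bias \<open>B\<^sub>1\<^sub>,\<^sub>i\<close>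
  and a Taylor remainder, which on the ball of radius \<open>\<xi>\<close> around \<open>\<theta>\<^sup>*\<^sub>i\<close> is at most
  \<open>\<kappa>\<^sub>3 (\<beta>\<^sub>1\<^sub>,\<^sub>i + \<gamma>\<^sub>1\<^sub>,\<^sub>i \<xi>\<^sup>2)\<close>. The two bounds on \<open>\<xi>\<close> make the total deviation at most
  \<open>\<sigma>\<^sub>r \<xi>\<close>, so the Newton-type map \<open>\<theta> \<mapsto> \<theta> + \<I>\<^sub>1\<^sub>,\<^sub>i\<inverse> \<phi> S\<^sub>1\<^sub>,\<^sub>i(\<theta>)\<close> sends the ball into
  itself, and Brouwer's fixed point theorem yields a zero of the score.\<close>

lemma sigma_min_mult_norm_le:
  fixes M :: "real^'r::finite^'r"
  shows "sigma_min M * norm v \<le> norm (M *v v)"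
proof (cases "v = 0")
  case True
  then show ?thesis by simp
next
  case False
  let ?u = "(1 / norm v) *\<^sub>R v"
  have "sigma_min M \<le> norm (M *v ?u)"
    unfolding sigma_min_def
    by (rule cINF_lower) (use False in \<open>auto intro: bdd_belowI[where m = 0]\<close>)
  also have "\<dots> = norm (M *v v) / norm v"
    by (simp add: matrix_vector_mult_scaleR)
  finally show ?thesis
    using False by (simp add: field_simps)
qed

lemma sigma_min_pos_obtains_right_inverse:
  fixes M :: "real^'r::finite^'r"
  assumes "sigma_min M > 0"
  obtains N where "M ** N = mat 1" and "\<And>w. sigma_min M * norm (N *v w) \<le> norm w"
proof -
  have "inj ((*v) M)"
  proof (rule injI)
    fix v w
    assume "M *v v = M *v w"
    then have "sigma_min M * norm (v - w) \<le> 0"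
      using sigma_min_mult_norm_le[of M "v - w"] by (simp add: matrix_vector_mult_diff_distrib)
    then show "v = w"
      using assms by (simp add: mult_le_0_iff)
  qed
  then obtain N where "N ** M = mat 1"
    using matrix_left_invertible_injective by blast
  then have right_inverse: "M ** N = mat 1"
    using matrix_left_right_inverse by blast
  have "sigma_min M * norm (N *v w) \<le> norm w" for w
    using sigma_min_mult_norm_le[of M "N *v w"] by (simp add: matrix_vector_mul_assoc right_inverse)
  with right_inverse show thesis
    using that by blast
qed

lemma zero_in_cball_if_near_affine:
  fixes F :: "real^'r::finite \<Rightarrow> real^'r" and M :: "real^'r^'r"
  assumes cont: "continuous_on (cball c \<xi>) F"
    and sigma_pos: "sigma_min M > 0"
    and xi_nonneg: "0 \<le> \<xi>"
    and near: "\<And>\<theta>. \<theta> \<in> cball c \<xi> \<Longrightarrow> norm (F \<theta> + M *v (\<theta> - c)) \<le> sigma_min M * \<xi>"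
  obtains \<theta> where "\<theta> \<in> cball c \<xi>" and "F \<theta> = 0"
proof -
  obtain N where right_inverse: "M ** N = mat 1"
    and N_bound: "\<And>w. sigma_min M * norm (N *v w) \<le> norm w"
    using sigma_min_pos_obtains_right_inverse[OF sigma_pos] by blast
  define T where "T \<theta> = c + N *v (F \<theta> + M *v (\<theta> - c))" for \<theta>
  have "T \<theta> \<in> cball c \<xi>" if "\<theta> \<in> cball c \<xi>" for \<theta>
  proof -
    have "sigma_min M * dist c (T \<theta>) \<le> sigma_min M * \<xi>"
      using N_bound[of "F \<theta> + M *v (\<theta> - c)"] near[OF that] by (simp add: T_def dist_norm)
    then show ?thesis
      using sigma_pos by simp
  qed
  moreover have "continuous_on (cball c \<xi>) T"
    unfolding T_def
    by (intro continuous_intros cont continuous_on_compose2[OF matrix_vector_mult_linear_continuous_on])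
      auto
  ultimately obtain \<theta> where \<theta>: "\<theta> \<in> cball c \<xi>" "T \<theta> = \<theta>"
    using brouwer[of "cball c \<xi>" T] xi_nonneg by auto
  then have "N *v (F \<theta> + M *v (\<theta> - c)) = \<theta> - c"
    unfolding T_def by (metis add_diff_cancel_left')
  then have "F \<theta> + M *v (\<theta> - c) = M *v (\<theta> - c)"
    by (metis matrix_vector_mul_assoc matrix_vector_mul_lid right_inverse)
  then have "F \<theta> = 0"
    by simp
  with \<theta> show thesis
    using that by blast
qed

definition lin_remainder :: "(real \<Rightarrow> real) \<Rightarrow> (real \<Rightarrow> real) \<Rightarrow> real \<Rightarrow> real \<Rightarrow> real" where
  "lin_remainder f f' m t = f t - f m - f' m * (t - m)"

lemma lin_remainder_eq_Taylor:
  fixes f f' f'' :: "real \<Rightarrow> real"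
  assumes f': "\<And>x. (f has_real_derivative f' x) (at x)"
    and f'': "\<And>x. (f' has_real_derivative f'' x) (at x)"
  obtains s where "min m t \<le> s" "s \<le> max m t" "lin_remainder f f' m t = f'' s / 2 * (t - m)\<^sup>2"
proof (cases "t = m")
  case True
  then show thesis
    using that[of m] by (simp add: lin_remainder_def)
next
  case False
  define diff where "diff k = (if k = 0 then f else if k = 1 then f' else f'')" for k :: nat
  have "\<forall>k x. k < 2 \<and> min m t \<le> x \<and> x \<le> max m t \<longrightarrow> DERIV (diff k) x :> diff (Suc k) x"
    using f' f'' by (auto simp: diff_def less_2_cases_iff)
  from Taylor[of 2 diff f "min m t" "max m t" m t, OF _ _ this] False
  obtain s where "if t < m then t < s \<and> s < m else m < s \<and> s < t"
    and "f t = (\<Sum>k<2. diff k m / fact k * (t - m) ^ k) + diff 2 s / fact 2 * (t - m)\<^sup>2"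
    by (auto simp: diff_def)
  then show thesis
    using that[of s] by (auto simp: diff_def lin_remainder_def numeral_2_eq_2 split: if_splits)
qed

lemma abs_le_kappa3:
  assumes "continuous_on {-\<alpha>..\<alpha>} f" and "\<bar>x\<bar> \<le> \<alpha>"
  shows "\<bar>f x\<bar> \<le> kappa3 f \<alpha>"
proof -
  have "compact ((\<lambda>x. \<bar>f x\<bar>) ` {-\<alpha>..\<alpha>})"
    by (intro compact_continuous_image continuous_intros assms(1)) simp
  moreover have "{x. \<bar>x\<bar> \<le> \<alpha>} = {-\<alpha>..\<alpha>}"
    by auto
  ultimately have "bdd_above ((\<lambda>x. \<bar>f x\<bar>) ` {x. \<bar>x\<bar> \<le> \<alpha>})"
    by (simp add: bounded_imp_bdd_above compact_imp_bounded)
  then show ?thesis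
    unfolding kappa3_def by (rule cSUP_upper[rotated]) (use assms in auto)
qed

lemma abs_lin_remainder_le_kappa3:
  fixes f f' f'' :: "real \<Rightarrow> real"
  assumes "\<And>x. (f has_real_derivative f' x) (at x)"
    and "\<And>x. (f' has_real_derivative f'' x) (at x)"
    and "continuous_on UNIV f''"
    and "\<bar>m\<bar> \<le> \<alpha>" "\<bar>t\<bar> \<le> \<alpha>"
  shows "\<bar>lin_remainder f f' m t\<bar> \<le> kappa3 f'' \<alpha> / 2 * (t - m)\<^sup>2"
proof -
  obtain s where "min m t \<le> s" "s \<le> max m t" and rem: "lin_remainder f f' m t = f'' s / 2 * (t - m)\<^sup>2"
    using lin_remainder_eq_Taylor assms(1,2) by blast
  then have "\<bar>f'' s\<bar> \<le> kappa3 f'' \<alpha>"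
    using assms(4,5) by (intro abs_le_kappa3 continuous_on_subset[OF assms(3) subset_UNIV]) auto
  then show ?thesis
    unfolding rem by (simp add: abs_mult mult_right_mono)
qed

lemma norm_row_le_two_to_inf_norm: "norm (X $ k) \<le> two_to_inf_norm X"
  unfolding two_to_inf_norm_def by (rule Max_ge) auto

lemma abs_inner_row_le:
  assumes "two_to_inf_norm X \<le> C" and "norm v \<le> D"
  shows "\<bar>X $ k \<bullet> v\<bar> \<le> C * D"
proof -
  have "\<bar>X $ k \<bullet> v\<bar> \<le> norm (X $ k) * norm v"
    by (rule Cauchy_Schwarz_ineq2)
  also have "\<dots> \<le> C * D"
    using norm_row_le_two_to_inf_norm[of X k] assms
    by (intro mult_mono) (auto intro: order_trans[OF norm_ge_zero, of "X $ k"])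
  finally show ?thesis .
qed

lemma weighted_sum_abs_inner_le_SUP:
  fixes A :: "real^'r::finite^'p::finite"
  assumes c: "\<And>j. 0 \<le> c j" and u: "norm u = 1"
  shows "(\<Sum>j\<in>UNIV. c j * \<bar>A $ j \<bullet> u\<bar> ^ k)
    \<le> (SUP v\<in>{v. norm v = 1}. \<Sum>j\<in>UNIV. c j * \<bar>A $ j \<bullet> v\<bar> ^ k)"
proof (rule cSUP_upper)
  have "(\<Sum>j\<in>UNIV. c j * \<bar>A $ j \<bullet> v\<bar> ^ k) \<le> (\<Sum>j\<in>UNIV. c j * norm (A $ j) ^ k)"
    if "norm v = 1" for v
  proof (intro sum_mono mult_left_mono power_mono c)
    show "\<bar>A $ j \<bullet> v\<bar> \<le> norm (A $ j)" for j
      using Cauchy_Schwarz_ineq2[of "A $ j" v] that by simp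
  qed auto
  then show "bdd_above ((\<lambda>v. \<Sum>j\<in>UNIV. c j * \<bar>A $ j \<bullet> v\<bar> ^ k) ` {v. norm v = 1})"
    by (intro bdd_aboveI2) auto
qed (use u in auto)

lemma sum_le_beta1:
  assumes "\<And>j. 0 \<le> w j" and "norm u = 1"
  shows "(\<Sum>j\<in>UNIV. w j * ((A $ j - Astar $ j) \<bullet> \<theta>)\<^sup>2 * \<bar>A $ j \<bullet> u\<bar>) \<le> beta1 w \<theta> Astar A"
  using weighted_sum_abs_inner_le_SUP[of "\<lambda>j. w j * ((A $ j - Astar $ j) \<bullet> \<theta>)\<^sup>2" u A 1] assms
  unfolding beta1_def by simp

lemma sum_le_gamma1:
  assumes "\<And>j. 0 \<le> w j" and "norm u = 1"
  shows "(\<Sum>j\<in>UNIV. w j * \<bar>A $ j \<bullet> u\<bar> ^ 3) \<le> gamma1 w A"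
  unfolding gamma1_def by (rule weighted_sum_abs_inner_le_SUP) (use assms in auto)

lemma gamma1_nonneg:
  fixes A :: "real^'r::finite^'p::finite"
  assumes "\<And>j. 0 \<le> w j"
  shows "0 \<le> gamma1 w A"
proof -
  obtain u :: "real^'r" where "norm u = 1"
    using vector_choose_size zero_le_one by blast
  have "0 \<le> (\<Sum>j\<in>UNIV. w j * \<bar>A $ j \<bullet> u\<bar> ^ 3)"
    using assms by (intro sum_nonneg) auto
  also have "\<dots> \<le> gamma1 w A"
    using sum_le_gamma1 assms \<open>norm u = 1\<close> by blast
  finally show ?thesis .
qed

lemma sum_cube_le_gamma1:
  fixes A :: "real^'r::finite^'p::finite"
  assumes "\<And>j. 0 \<le> w j"
  shows "(\<Sum>j\<in>UNIV. w j * \<bar>A $ j \<bullet> d\<bar> ^ 3) \<le> gamma1 w A * norm d ^ 3"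
proof (cases "d = 0")
  case True
  then show ?thesis by simp
next
  case False
  let ?u = "(1 / norm d) *\<^sub>R d"
  have "(\<Sum>j\<in>UNIV. w j * \<bar>A $ j \<bullet> d\<bar> ^ 3) / norm d ^ 3 = (\<Sum>j\<in>UNIV. w j * \<bar>A $ j \<bullet> ?u\<bar> ^ 3)"
    by (simp add: sum_divide_distrib abs_mult power_mult_distrib power_divide)
  also have "\<dots> \<le> gamma1 w A"
    using sum_le_gamma1[OF assms, where u = ?u] False by simp
  finally show ?thesis
    using False by (simp add: divide_le_eq)
qed

text \<open>Hoelder's inequality in the form needed here, via \<open>3 a\<^sup>2 b \<le> 2 a\<^sup>3 + b\<^sup>3\<close>
  with \<open>a = \<bar>a\<^sub>j \<bullet> d\<bar>\<close> and \<open>b = \<xi> \<bar>a\<^sub>j \<bullet> u\<bar>\<close>.\<close>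

lemma sum_sq_abs_le_gamma1:
  fixes A :: "real^'r::finite^'p::finite"
  assumes w: "\<And>j. 0 \<le> w j" and u: "norm u = 1" and d: "norm d \<le> \<xi>" and xi_pos: "0 < \<xi>"
  shows "(\<Sum>j\<in>UNIV. w j * (A $ j \<bullet> d)\<^sup>2 * \<bar>A $ j \<bullet> u\<bar>) \<le> gamma1 w A * \<xi>\<^sup>2"
proof -
  have amgm: "3 * (a\<^sup>2 * b) \<le> 2 * a ^ 3 + b ^ 3" if "0 \<le> a" "0 \<le> b" for a b :: real
  proof -
    have "2 * a ^ 3 + b ^ 3 - 3 * (a\<^sup>2 * b) = (a - b)\<^sup>2 * (2 * a + b)"
      by (simp add: algebra_simps power2_eq_square power3_eq_cube)
    also have "\<dots> \<ge> 0"
      using that by simp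
    finally show ?thesis by simp
  qed
  have "3 * \<xi> * (\<Sum>j\<in>UNIV. w j * (A $ j \<bullet> d)\<^sup>2 * \<bar>A $ j \<bullet> u\<bar>)
      = (\<Sum>j\<in>UNIV. w j * (3 * (\<bar>A $ j \<bullet> d\<bar>\<^sup>2 * (\<xi> * \<bar>A $ j \<bullet> u\<bar>))))"
    by (simp add: sum_distrib_left algebra_simps)
  also have "\<dots> \<le> (\<Sum>j\<in>UNIV. w j * (2 * \<bar>A $ j \<bullet> d\<bar> ^ 3 + (\<xi> * \<bar>A $ j \<bullet> u\<bar>) ^ 3))"
    using w xi_pos by (intro sum_mono mult_left_mono amgm) auto
  also have "\<dots> = 2 * (\<Sum>j\<in>UNIV. w j * \<bar>A $ j \<bullet> d\<bar> ^ 3) + \<xi> ^ 3 * (\<Sum>j\<in>UNIV. w j * \<bar>A $ j \<bullet> u\<bar> ^ 3)"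
    by (simp add: sum.distrib sum_distrib_left algebra_simps)
  also have "\<dots> \<le> 2 * (gamma1 w A * \<xi> ^ 3) + \<xi> ^ 3 * gamma1 w A"
  proof (intro add_mono mult_left_mono)
    have "(\<Sum>j\<in>UNIV. w j * \<bar>A $ j \<bullet> d\<bar> ^ 3) \<le> gamma1 w A * norm d ^ 3"
      by (rule sum_cube_le_gamma1[OF w])
    also have "\<dots> \<le> gamma1 w A * \<xi> ^ 3"
      using d gamma1_nonneg[OF w] by (intro mult_left_mono power_mono) auto
    finally show "(\<Sum>j\<in>UNIV. w j * \<bar>A $ j \<bullet> d\<bar> ^ 3) \<le> gamma1 w A * \<xi> ^ 3" .
  qed (use sum_le_gamma1[OF w u] xi_pos in auto)
  also have "\<dots> = 3 * \<xi> * (gamma1 w A * \<xi>\<^sup>2)"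
    by (simp add: power2_eq_square power3_eq_cube)
  finally show ?thesis
    using xi_pos by simp
qed

lemma norm_eq_inner_unit_vector:
  fixes v :: "'a::euclidean_space"
  obtains u where "norm u = 1" and "norm v = v \<bullet> u"
proof (cases "v = 0")
  case True
  obtain u :: 'a where "u \<in> Basis"
    using nonempty_Basis by blast
  with True show thesis
    using that[of u] by simp
next
  case False
  then show thesis
    using that[of "(1 / norm v) *\<^sub>R v"] by (simp add: power2_norm_eq_inner[symmetric] power2_eq_square)
qed

lemma norm_weighted_remainder_le:
  fixes A Astar :: "real^'r::finite^'p::finite" and R :: "'p \<Rightarrow> real"
  assumes w: "\<And>j. 0 \<le> w j" and kappa: "0 \<le> \<kappa>" and xi_pos: "0 < \<xi>"
    and near: "norm (\<theta> - \<theta>\<^sub>0) \<le> \<xi>"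
    and R: "\<And>j. \<bar>R j\<bar> \<le> \<kappa> / 2 * (A $ j \<bullet> \<theta> - \<theta>\<^sub>0 \<bullet> Astar $ j)\<^sup>2"
  shows "norm (\<Sum>j\<in>UNIV. (w j * R j) *\<^sub>R A $ j) \<le> \<kappa> * (beta1 w \<theta>\<^sub>0 Astar A + gamma1 w A * \<xi>\<^sup>2)"
proof -
  define d where "d = \<theta> - \<theta>\<^sub>0"
  define e where "e j = (A $ j - Astar $ j) \<bullet> \<theta>\<^sub>0" for j
  obtain u where u: "norm u = 1"
    and norm_eq: "norm (\<Sum>j\<in>UNIV. (w j * R j) *\<^sub>R A $ j) = (\<Sum>j\<in>UNIV. (w j * R j) *\<^sub>R A $ j) \<bullet> u"
    using norm_eq_inner_unit_vector by blast
  have pointwise: "w j * R j * (A $ j \<bullet> u)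
      \<le> \<kappa> * (w j * (e j)\<^sup>2 * \<bar>A $ j \<bullet> u\<bar>) + \<kappa> * (w j * (A $ j \<bullet> d)\<^sup>2 * \<bar>A $ j \<bullet> u\<bar>)" for j
  proof -
    have split: "A $ j \<bullet> \<theta> - \<theta>\<^sub>0 \<bullet> Astar $ j = e j + A $ j \<bullet> d"
      by (simp add: e_def d_def inner_diff_left inner_diff_right inner_commute)
    have sq: "(e j + A $ j \<bullet> d)\<^sup>2 \<le> 2 * ((e j)\<^sup>2 + (A $ j \<bullet> d)\<^sup>2)"
      using sum_squares_bound[of "e j" "A $ j \<bullet> d"] by (simp add: power2_eq_square algebra_simps)
    have "\<kappa> / 2 * (e j + A $ j \<bullet> d)\<^sup>2 \<le> \<kappa> * ((e j)\<^sup>2 + (A $ j \<bullet> d)\<^sup>2)"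
      using mult_left_mono[OF sq, of "\<kappa> / 2"] kappa by (simp add: algebra_simps)
    then have "\<bar>R j\<bar> \<le> \<kappa> * ((e j)\<^sup>2 + (A $ j \<bullet> d)\<^sup>2)"
      using R[of j] unfolding split by linarith
    then have "\<bar>R j\<bar> * \<bar>A $ j \<bullet> u\<bar> \<le> \<kappa> * ((e j)\<^sup>2 + (A $ j \<bullet> d)\<^sup>2) * \<bar>A $ j \<bullet> u\<bar>"
      by (intro mult_right_mono) auto
    moreover have "R j * (A $ j \<bullet> u) \<le> \<bar>R j\<bar> * \<bar>A $ j \<bullet> u\<bar>"
      by (metis abs_ge_self abs_mult)
    ultimately have "R j * (A $ j \<bullet> u) \<le> \<kappa> * ((e j)\<^sup>2 + (A $ j \<bullet> d)\<^sup>2) * \<bar>A $ j \<bullet> u\<bar>"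
      by linarith
    from mult_left_mono[OF this w[of j]] show ?thesis
      by (simp add: algebra_simps)
  qed
  have "norm (\<Sum>j\<in>UNIV. (w j * R j) *\<^sub>R A $ j) = (\<Sum>j\<in>UNIV. w j * R j * (A $ j \<bullet> u))"
    unfolding norm_eq by (simp add: inner_sum_left)
  also have "\<dots> \<le> (\<Sum>j\<in>UNIV. \<kappa> * (w j * (e j)\<^sup>2 * \<bar>A $ j \<bullet> u\<bar>) + \<kappa> * (w j * (A $ j \<bullet> d)\<^sup>2 * \<bar>A $ j \<bullet> u\<bar>))"
    by (rule sum_mono) (rule pointwise)
  also have "\<dots> = \<kappa> * (\<Sum>j\<in>UNIV. w j * (e j)\<^sup>2 * \<bar>A $ j \<bullet> u\<bar>) + \<kappa> * (\<Sum>j\<in>UNIV. w j * (A $ j \<bullet> d)\<^sup>2 * \<bar>A $ j \<bullet> u\<bar>)"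
    by (simp add: sum.distrib sum_distrib_left)
  also have "\<dots> \<le> \<kappa> * beta1 w \<theta>\<^sub>0 Astar A + \<kappa> * (gamma1 w A * \<xi>\<^sup>2)"
    using sum_le_beta1[OF w u] sum_sq_abs_le_gamma1[OF w u _ xi_pos] near kappa
    by (intro add_mono mult_left_mono) (auto simp: e_def d_def)
  finally show ?thesis
    by (simp add: algebra_simps)
qed

lemma norm_score_remainder_le:
  fixes f f' f'' :: "real \<Rightarrow> real" and A Astar :: "real^'r::finite^'p::finite"
  assumes f': "\<And>x. (f has_real_derivative f' x) (at x)"
    and f'': "\<And>x. (f' has_real_derivative f'' x) (at x)"
    and f''_cont: "continuous_on UNIV f''"
    and w: "\<And>j. 0 \<le> w j"
    and A_bd: "two_to_inf_norm A \<le> C2" and Astar_bd: "two_to_inf_norm Astar \<le> C2"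
    and center_bd: "norm \<theta>\<^sub>0 \<le> C1"
    and xi_pos: "0 < \<xi>" and near: "norm (\<theta> - \<theta>\<^sub>0) \<le> \<xi>"
  shows "norm (\<Sum>j\<in>UNIV. (w j * lin_remainder f f' (\<theta>\<^sub>0 \<bullet> Astar $ j) (A $ j \<bullet> \<theta>)) *\<^sub>R A $ j)
    \<le> kappa3 f'' (C2 * (C1 + \<xi>)) * (beta1 w \<theta>\<^sub>0 Astar A + gamma1 w A * \<xi>\<^sup>2)"
proof (rule norm_weighted_remainder_le[OF w _ xi_pos near])
  let ?\<alpha> = "C2 * (C1 + \<xi>)"
  have "0 \<le> C2"
    using A_bd norm_row_le_two_to_inf_norm[of A] by (meson norm_ge_zero order_trans)
  have "norm \<theta> \<le> C1 + \<xi>"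
    using norm_triangle_sub[of \<theta> \<theta>\<^sub>0] center_bd near by linarith
  then have bound_\<theta>: "\<bar>A $ j \<bullet> \<theta>\<bar> \<le> ?\<alpha>" for j
    using abs_inner_row_le[OF A_bd] by blast
  have "\<bar>\<theta>\<^sub>0 \<bullet> Astar $ j\<bar> \<le> C2 * C1" for j
    using abs_inner_row_le[OF Astar_bd center_bd] by (simp add: inner_commute)
  also have "\<dots> \<le> ?\<alpha>"
    using \<open>0 \<le> C2\<close> xi_pos by (intro mult_left_mono) auto
  finally have bound_center: "\<bar>\<theta>\<^sub>0 \<bullet> Astar $ j\<bar> \<le> ?\<alpha>" for j .
  have "\<bar>f'' 0\<bar> \<le> kappa3 f'' ?\<alpha>"
    using order_trans[OF abs_ge_zero bound_center]
    by (intro abs_le_kappa3 continuous_on_subset[OF f''_cont subset_UNIV]) simp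
  then show "0 \<le> kappa3 f'' ?\<alpha>"
    by (rule order_trans[OF abs_ge_zero])
  show "\<bar>lin_remainder f f' (\<theta>\<^sub>0 \<bullet> Astar $ j) (A $ j \<bullet> \<theta>)\<bar>
      \<le> kappa3 f'' ?\<alpha> / 2 * (A $ j \<bullet> \<theta> - \<theta>\<^sub>0 \<bullet> Astar $ j)\<^sup>2" for j
    using abs_lin_remainder_le_kappa3[OF f' f'' f''_cont bound_center bound_\<theta>] .
qed

lemma I1_mult_vec:
  "I1 g w m A *v d = (\<Sum>j\<in>UNIV. (w j * g (m j) * (A $ j \<bullet> d)) *\<^sub>R A $ j)"
  unfolding I1_def
  by (simp add: vec_eq_iff matrix_vector_mult_def inner_vec_def sum_distrib_left sum_distrib_right
      algebra_simps) (subst sum.swap, simp add: sum_distrib_left algebra_simps)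

lemma score_sum_linearization:
  fixes A Astar :: "real^'r::finite^'p::finite" and \<theta> \<theta>\<^sub>0 :: "real^'r"
  defines "m \<equiv> \<lambda>j. \<theta>\<^sub>0 \<bullet> Astar $ j"
  shows "(\<Sum>j\<in>UNIV. (w j * (y j - f (A $ j \<bullet> \<theta>))) *\<^sub>R A $ j) + I1 f' w m A *v (\<theta> - \<theta>\<^sub>0)
    = (\<Sum>j\<in>UNIV. ((y j - f (m j)) * w j) *\<^sub>R A $ j) - B1 f' w m \<theta>\<^sub>0 Astar A
      - (\<Sum>j\<in>UNIV. (w j * lin_remainder f f' (m j) (A $ j \<bullet> \<theta>)) *\<^sub>R A $ j)"
proof -
  have "w j * (y j - f (A $ j \<bullet> \<theta>)) + w j * f' (m j) * (A $ j \<bullet> (\<theta> - \<theta>\<^sub>0))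
      = (y j - f (m j)) * w j - w j * f' (m j) * ((A $ j - Astar $ j) \<bullet> \<theta>\<^sub>0)
        - w j * lin_remainder f f' (m j) (A $ j \<bullet> \<theta>)" for j
    by (simp add: m_def lin_remainder_def inner_commute algebra_simps)
  then show ?thesis
    unfolding I1_mult_vec B1_def
    by (simp add: sum_subtractf scaleR_diff_left flip: sum.distrib scaleR_add_left)
qed

lemma radius_condition_imp_le:
  fixes s \<xi> a \<beta> \<gamma> \<kappa> :: real
  assumes s_pos: "0 < s" and xi_nonneg: "0 \<le> \<xi>"
    and lower: "2 / s * (a + \<beta> * \<kappa>) \<le> \<xi>"
    and upper: "\<gamma> * \<kappa> = 0 \<or> \<xi> \<le> s / (2 * \<gamma> * \<kappa>)"
  shows "a + \<kappa> * (\<beta> + \<gamma> * \<xi>\<^sup>2) \<le> s * \<xi>"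
proof -
  have "a + \<beta> * \<kappa> \<le> s * \<xi> / 2"
    using lower s_pos by (simp add: field_simps)
  moreover have "\<gamma> * \<kappa> * \<xi> \<le> s / 2"
  proof (cases "\<gamma> * \<kappa> = 0")
    case False
    then have xi_le: "\<xi> \<le> s / (2 * \<gamma> * \<kappa>)"
      using upper by blast
    have "\<gamma> * \<kappa> > 0"
    proof (rule ccontr)
      assume "\<not> \<gamma> * \<kappa> > 0"
      with False have "2 * \<gamma> * \<kappa> < 0"
        by linarith
      then have "s / (2 * \<gamma> * \<kappa>) < 0"
        using s_pos by (simp add: divide_pos_neg)
      with xi_le xi_nonneg show False
        by linarith
    qed
    with xi_le show ?thesis
      by (simp add: field_simps)
  qed (use s_pos in auto)
  then have "\<gamma> * \<kappa> * \<xi> * \<xi> \<le> s / 2 * \<xi>"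
    using xi_nonneg by (rule mult_right_mono)
  ultimately show ?thesis
    by (simp add: power2_eq_square algebra_simps)
qed

lemma norm_score_sum_near_affine_le:
  fixes f f' f'' :: "real \<Rightarrow> real" and A Astar :: "real^'r::finite^'p::finite"
    and \<theta> \<theta>\<^sub>0 :: "real^'r"
  defines "m \<equiv> \<lambda>j. \<theta>\<^sub>0 \<bullet> Astar $ j"
  assumes f': "\<And>x. (f has_real_derivative f' x) (at x)"
    and f'': "\<And>x. (f' has_real_derivative f'' x) (at x)"
    and f''_cont: "continuous_on UNIV f''"
    and w: "\<And>j. 0 \<le> w j"
    and A_bd: "two_to_inf_norm A \<le> C2" and Astar_bd: "two_to_inf_norm Astar \<le> C2"
    and center_bd: "norm \<theta>\<^sub>0 \<le> C1"
    and xi_pos: "0 < \<xi>" and near: "norm (\<theta> - \<theta>\<^sub>0) \<le> \<xi>"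
  shows "norm ((\<Sum>j\<in>UNIV. (w j * (y j - f (A $ j \<bullet> \<theta>))) *\<^sub>R A $ j) + I1 f' w m A *v (\<theta> - \<theta>\<^sub>0))
    \<le> norm (\<Sum>j\<in>UNIV. ((y j - f (m j)) * w j) *\<^sub>R A $ j) + norm (B1 f' w m \<theta>\<^sub>0 Astar A)
      + kappa3 f'' (C2 * (C1 + \<xi>)) * (beta1 w \<theta>\<^sub>0 Astar A + gamma1 w A * \<xi>\<^sup>2)"
proof -
  let ?Z = "\<Sum>j\<in>UNIV. ((y j - f (m j)) * w j) *\<^sub>R A $ j"
  let ?B = "B1 f' w m \<theta>\<^sub>0 Astar A"
  let ?R = "\<Sum>j\<in>UNIV. (w j * lin_remainder f f' (m j) (A $ j \<bullet> \<theta>)) *\<^sub>R A $ j"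
  have "norm ((\<Sum>j\<in>UNIV. (w j * (y j - f (A $ j \<bullet> \<theta>))) *\<^sub>R A $ j) + I1 f' w m A *v (\<theta> - \<theta>\<^sub>0))
      = norm (?Z - ?B - ?R)"
    unfolding m_def score_sum_linearization ..
  also have "\<dots> \<le> norm ?Z + norm ?B + norm ?R"
    using norm_triangle_ineq4[of "?Z - ?B" ?R] norm_triangle_ineq4[of ?Z ?B] by linarith
  also have "norm ?R \<le> kappa3 f'' (C2 * (C1 + \<xi>)) * (beta1 w \<theta>\<^sub>0 Astar A + gamma1 w A * \<xi>\<^sup>2)"
    unfolding m_def
    by (rule norm_score_remainder_le[OF f' f'' f''_cont w A_bd Astar_bd center_bd xi_pos near])
  finally show ?thesis
    by simp
qed

lemma continuous_on_score_sum:
  fixes A :: "real^'r::finite^'p::finite"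
  assumes "continuous_on UNIV f"
  shows "continuous_on S (\<lambda>\<theta>. \<Sum>j\<in>UNIV. (w j * (y j - f (A $ j \<bullet> \<theta>))) *\<^sub>R A $ j)"
  by (intro continuous_intros continuous_on_compose2[OF assms]) auto

theorem mainTheorem9:
  fixes \<phi> C1 C2 \<xi> :: real
    and b b1 b2 b3 :: "real \<Rightarrow> real"
    and y \<omega> :: "'n::finite \<Rightarrow> 'p::finite \<Rightarrow> real"
    and Thetastar :: "real^'r::finite^'n"
    and Astar A :: "real^'r^'p"
    and i :: 'n
  defines "mstar \<equiv> \<lambda>i' j. (Thetastar $ i') \<bullet> (Astar $ j)"
  defines "z \<equiv> \<lambda>i' j. y i' j - b1 (mstar i' j)"
  assumes phi_pos: "\<phi> > 0"
    and b_d1: "\<And>x. (b has_real_derivative b1 x) (at x)"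
    and b_d2: "\<And>x. (b1 has_real_derivative b2 x) (at x)"
    and b_d3: "\<And>x. (b2 has_real_derivative b3 x) (at x)"
    and b3_cont: "continuous_on UNIV b3"
    and b2_pos: "\<And>x. b2 x > 0"
    and omega01: "\<And>i' j. \<omega> i' j \<in> {0, 1}"
    and Theta_bd: "two_to_inf_norm Thetastar \<le> C1"
    and Astar_bd: "two_to_inf_norm Astar \<le> C2"
    and A_bd: "two_to_inf_norm A \<le> C2"
    and sigma_pos: "sigma_min (I1 b2 (\<omega> i) (mstar i) A) > 0"
    and xi_pos: "\<xi> > 0"
    and lower: "2 / sigma_min (I1 b2 (\<omega> i) (mstar i) A) *
        (norm (\<Sum>j\<in>UNIV. (z i j * \<omega> i j) *\<^sub>R (A $ j))
         + norm (B1 b2 (\<omega> i) (mstar i) (Thetastar $ i) Astar A)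
         + beta1 (\<omega> i) (Thetastar $ i) Astar A * kappa3 b3 (C2 * (C1 + \<xi>))) \<le> \<xi>"
    and upper: "gamma1 (\<omega> i) A * kappa3 b3 (C2 * (C1 + \<xi>)) = 0 \<or>
        \<xi> \<le> sigma_min (I1 b2 (\<omega> i) (mstar i) A) /
              (2 * gamma1 (\<omega> i) A * kappa3 b3 (C2 * (C1 + \<xi>)))"
  shows "\<exists>\<theta>::real^'r. norm (\<theta> - Thetastar $ i) \<le> \<xi> \<and>
           S1 \<phi> b1 (y i) (\<omega> i) \<theta> A = 0"
proof -
  define \<theta>\<^sub>0 where "\<theta>\<^sub>0 = Thetastar $ i"
  define M where "M = I1 b2 (\<omega> i) (mstar i) A"
  define F where "F = (\<lambda>\<theta>. \<Sum>j\<in>UNIV. (\<omega> i j * (y i j - b1 (A $ j \<bullet> \<theta>))) *\<^sub>R A $ j)"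
  have w: "0 \<le> \<omega> i j" for j
    using omega01[of i j] by auto
  have "norm \<theta>\<^sub>0 \<le> C1"
    using norm_row_le_two_to_inf_norm[of Thetastar i] Theta_bd by (simp add: \<theta>\<^sub>0_def)
  have "norm (F \<theta> + M *v (\<theta> - \<theta>\<^sub>0)) \<le> sigma_min M * \<xi>" if "\<theta> \<in> cball \<theta>\<^sub>0 \<xi>" for \<theta>
  proof -
    have "norm (\<theta> - \<theta>\<^sub>0) \<le> \<xi>"
      using that by (simp add: dist_norm norm_minus_commute)
    from norm_score_sum_near_affine_le[OF b_d2 b_d3 b3_cont w A_bd Astar_bd \<open>norm \<theta>\<^sub>0 \<le> C1\<close> xi_pos this]
    have "norm (F \<theta> + M *v (\<theta> - \<theta>\<^sub>0)) \<le> norm (\<Sum>j\<in>UNIV. (z i j * \<omega> i j) *\<^sub>R A $ j)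
        + norm (B1 b2 (\<omega> i) (mstar i) \<theta>\<^sub>0 Astar A)
        + kappa3 b3 (C2 * (C1 + \<xi>)) * (beta1 (\<omega> i) \<theta>\<^sub>0 Astar A + gamma1 (\<omega> i) A * \<xi>\<^sup>2)"
      unfolding F_def M_def z_def mstar_def \<theta>\<^sub>0_def by simp
    also have "\<dots> \<le> sigma_min M * \<xi>"
      using radius_condition_imp_le[OF sigma_pos _ lower upper] xi_pos
      unfolding M_def \<theta>\<^sub>0_def by simp
    finally show ?thesis .
  qed
  moreover have "continuous_on (cball \<theta>\<^sub>0 \<xi>) F"
    unfolding F_def using b_d2
    by (intro continuous_on_score_sum continuous_at_imp_continuous_on) (auto intro: DERIV_isCont)
  ultimately obtain \<theta> where "\<theta> \<in> cball \<theta>\<^sub>0 \<xi>" and "F \<theta> = 0"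
    using zero_in_cball_if_near_affine[of \<theta>\<^sub>0 \<xi> F M] sigma_pos xi_pos unfolding M_def by auto
  then show ?thesis
    unfolding S1_def F_def \<theta>\<^sub>0_def by (auto simp: dist_norm norm_minus_commute)
qed

end
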